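(* For any $y\in\mathbb{R}^n$ and any $\bar y$ with $A\bar y\le b$, $$\big\langle\bar y-y,\ \mathbb{E}_{\mathbb{S}}[a_{i^*}(a_{i^*}^Ty-b_{i^*})^+]\big\rangle=\langle\bar y-y,\nabla f(y)\rangle\le-2f(y)\le-\mu_1d(y,P)^2,$$ where $i^*$ is selected at the point $y$.
   Context: Let $A\in\mathbb{R}^{m\times n}$ have rows $a_1^T,\dots,a_m^T$ with $\|a_i\|_2=1$, and $b\in\mathbb{R}^m$; assume $Ax\le b$ is consistent and let $P=\{x:Ax\le b\}$, $\mathcal{P}(x)$ the Euclidean projection onto $P$, $d(x,P)=\|x-\mathcal{P}(x)\|$, $t^+=\max\{t,0\}$. Fix an integer $1\le\beta\le m$. Sampling distribution $\mathbb{S}$ at $y$: $\tau\subseteq\{1,\dots,m\}$ with $|\tau|=\beta$ uniformly at random, and $i^*\in\tau$ maximizing $(a_i^Ty-b_i)^+$ over $\tau$; $\mathbb{E}_{\mathbb{S}}$ is expectation over $\tau$. $f(y)=\mathbb{E}_{\mathbb{S}}[\frac12|(a_{i^*}^Ty-b_{i^*})^+|^2]$ and $\nabla f(y):=\mathbb{E}_{\mathbb{S}}[(a_{i^*}^Ty-b_{i^*})^+a_{i^*}]$. $L>0$ is a Hoffman constant ($d(x,P)^2\le L^2\|(Ax-b)^+\|^2$ for all $x$); $\mu_1=\frac1{mL^2}$. *)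

theory Defs
  imports "HOL-Analysis.Analysis"
begin

text \<open>A :: real^'n^'m has rows A $ i (i ranges over the finite index type 'm, m = CARD('m)),
  b :: real^'m.  t^+ = max t 0.\<close>

definition pospart :: "real \<Rightarrow> real" where
  "pospart t = max t 0"

definition polyhedron :: "real^'n^'m \<Rightarrow> real^'m \<Rightarrow> (real^'n) set" where
  "polyhedron A b = {x. \<forall>i. (A $ i) \<bullet> x \<le> b $ i}"

definition resid :: "real^'n^'m \<Rightarrow> real^'m \<Rightarrow> real^'n \<Rightarrow> 'm \<Rightarrow> real" where
  "resid A b y i = pospart ((A $ i) \<bullet> y - b $ i)"

text \<open>Sample space of the distribution S: all beta-element subsets tau of {1..m}, uniform.\<close>
definition samples :: "nat \<Rightarrow> 'm::finite set set" where
  "samples \<beta> = {\<tau>. card \<tau> = \<beta>}"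

definition expS :: "nat \<Rightarrow> ('m::finite set \<Rightarrow> 'b::real_vector) \<Rightarrow> 'b" where
  "expS \<beta> g = (1 / real (card (samples \<beta> :: 'm set set))) *\<^sub>R (\<Sum>\<tau>\<in>samples \<beta>. g \<tau>)"

definition valid_selection :: "real^'n^'m \<Rightarrow> real^'m \<Rightarrow> nat \<Rightarrow> real^'n \<Rightarrow> ('m set \<Rightarrow> 'm) \<Rightarrow> bool" where
  "valid_selection A b \<beta> y sel \<longleftrightarrow>
     (\<forall>\<tau>\<in>samples \<beta>. sel \<tau> \<in> \<tau> \<and> (\<forall>i\<in>\<tau>. resid A b y i \<le> resid A b y (sel \<tau>)))"

definition f_obj :: "real^'n^'m \<Rightarrow> real^'m \<Rightarrow> nat \<Rightarrow> ('m set \<Rightarrow> 'm) \<Rightarrow> real^'n \<Rightarrow> real" where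
  "f_obj A b \<beta> sel y = expS \<beta> (\<lambda>\<tau>. (1/2) * (resid A b y (sel \<tau>))\<^sup>2)"

definition grad_f :: "real^'n^'m \<Rightarrow> real^'m \<Rightarrow> nat \<Rightarrow> ('m set \<Rightarrow> 'm) \<Rightarrow> real^'n \<Rightarrow> real^'n" where
  "grad_f A b \<beta> sel y = expS \<beta> (\<lambda>\<tau>. resid A b y (sel \<tau>) *\<^sub>R (A $ sel \<tau>))"

definition hoffman_const :: "real^'n^'m \<Rightarrow> real^'m \<Rightarrow> real \<Rightarrow> bool" where
  "hoffman_const A b L \<longleftrightarrow>
     (\<forall>x. (infdist x (polyhedron A b))\<^sup>2 \<le> L\<^sup>2 * (\<Sum>i\<in>UNIV. (resid A b x i)\<^sup>2))"

end

theory Submission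
  imports Defs
begin

text \<open>Since \<open>a\<^sub>i\<^sup>T ybar \<le> b\<^sub>i\<close>, each term satisfies
  \<open>\<langle>ybar - y, r\<^sub>i a\<^sub>i\<rangle> \<le> -r\<^sub>i\<^sup>2\<close> for the residual \<open>r\<^sub>i = (a\<^sub>i\<^sup>T y - b\<^sub>i)\<^sup>+\<close>;
  averaging over \<open>\<tau>\<close> gives the first inequality. For the second, the greedy residual
  \<open>r\<^sub>i\<^sub>*\<^sup>2\<close> dominates the mean of \<open>r\<^sub>i\<^sup>2\<close> over \<open>\<tau>\<close>, and a uniform \<open>\<beta>\<close>-subset contains
  each index with probability \<open>\<beta>/m\<close>, so \<open>2f(y) \<ge> \<parallel>(Ay - b)\<^sup>+\<parallel>\<^sup>2/m\<close>; Hoffman's bound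
  finishes.\<close>

lemma card_samples: "card (samples \<beta> :: 'm::finite set set) = CARD('m) choose \<beta>"
  unfolding samples_def using n_subsets[of "UNIV :: 'm set" \<beta>] by simp

lemma card_samples_containing:
  fixes i :: "'m::finite"
  assumes "1 \<le> \<beta>"
  shows "card {\<tau>\<in>samples \<beta>. i \<in> \<tau>} = (CARD('m) - 1) choose (\<beta> - 1)"
proof -
  have "bij_betw (insert i) {\<sigma>. \<sigma> \<subseteq> - {i} \<and> card \<sigma> = \<beta> - 1} {\<tau>\<in>samples \<beta>. i \<in> \<tau>}"
    by (rule bij_betw_byWitness[where f' = "\<lambda>\<tau>. \<tau> - {i}"])
      (use assms in \<open>auto simp: samples_def card_insert_if card_Diff_singleton subset_iff\<close>)
  then have "card {\<tau>\<in>samples \<beta>. i \<in> \<tau>} = card {\<sigma>. \<sigma> \<subseteq> - {i} \<and> card \<sigma> = \<beta> - 1}"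
    by (simp add: bij_betw_same_card)
  also have "\<dots> = card (- {i}) choose (\<beta> - 1)"
    by (rule n_subsets) simp
  also have "card (- {i}) = CARD('m) - 1"
    by (simp add: Compl_eq_Diff_UNIV card_Diff_singleton)
  finally show ?thesis .
qed

lemma sum_samples_sum_members:
  fixes g :: "'m::finite \<Rightarrow> real"
  assumes "1 \<le> \<beta>"
  shows "(\<Sum>\<tau>\<in>samples \<beta>. \<Sum>i\<in>\<tau>. g i) = real ((CARD('m) - 1) choose (\<beta> - 1)) * (\<Sum>i\<in>UNIV. g i)"
proof -
  have "(\<Sum>\<tau>\<in>samples \<beta>. \<Sum>i\<in>\<tau>. g i) = (\<Sum>\<tau>\<in>samples \<beta>. \<Sum>i\<in>{i. i \<in> UNIV \<and> i \<in> \<tau>}. g i)"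
    by simp
  also have "\<dots> = (\<Sum>i\<in>UNIV. \<Sum>\<tau>\<in>{\<tau>. \<tau> \<in> samples \<beta> \<and> i \<in> \<tau>}. g i)"
    by (rule sum.swap_restrict) simp_all
  also have "\<dots> = (\<Sum>i\<in>UNIV. real ((CARD('m) - 1) choose (\<beta> - 1)) * g i)"
    by (simp add: card_samples_containing[OF assms])
  finally show ?thesis
    by (simp add: sum_distrib_left)
qed

lemma expS_sum_members:
  fixes g :: "'m::finite \<Rightarrow> real"
  assumes "1 \<le> \<beta>" "\<beta> \<le> CARD('m)"
  shows "expS \<beta> (\<lambda>\<tau>. \<Sum>i\<in>\<tau>. g i) = real \<beta> / real CARD('m) * (\<Sum>i\<in>UNIV. g i)"
proof -
  have "real \<beta> * real (CARD('m) choose \<beta>) = real CARD('m) * real ((CARD('m) - 1) choose (\<beta> - 1))"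
    using times_binomial_minus1_eq[of \<beta> "CARD('m)"] assms(1) by (simp flip: of_nat_mult)
  moreover have "CARD('m) choose \<beta> > 0"
    using assms(2) by simp
  ultimately show ?thesis
    unfolding expS_def card_samples sum_samples_sum_members[OF assms(1)]
    by (simp add: field_simps)
qed

lemma inner_expS: "inner v (expS \<beta> g) = expS \<beta> (\<lambda>\<tau>. inner v (g \<tau>))"
  by (simp add: expS_def inner_sum_right)

lemma expS_mono:
  fixes g h :: "'m::finite set \<Rightarrow> real"
  assumes "\<And>\<tau>. \<tau> \<in> samples \<beta> \<Longrightarrow> g \<tau> \<le> h \<tau>"
  shows "expS \<beta> g \<le> expS \<beta> h"
  unfolding expS_def using assms by (simp add: sum_mono divide_right_mono)

lemma expS_cmult:
  fixes g :: "'m::finite set \<Rightarrow> real"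
  shows "expS \<beta> (\<lambda>\<tau>. c * g \<tau>) = c * expS \<beta> g"
  by (simp add: expS_def sum_distrib_left mult.left_commute)

lemma resid_nonneg: "resid A b y i \<ge> 0"
  by (simp add: resid_def pospart_def)

lemma inner_resid_row_le:
  assumes "ybar \<in> polyhedron A b"
  shows "inner (ybar - y) (resid A b y i *\<^sub>R A $ i) \<le> - (resid A b y i)\<^sup>2"
proof (cases "A $ i \<bullet> y - b $ i > 0")
  case True
  then have r: "resid A b y i = A $ i \<bullet> y - b $ i"
    by (simp add: resid_def pospart_def)
  have "A $ i \<bullet> ybar \<le> b $ i"
    using assms by (simp add: polyhedron_def)
  then have "A $ i \<bullet> ybar - A $ i \<bullet> y \<le> - resid A b y i"
    using r by simp
  then have "resid A b y i * (A $ i \<bullet> ybar - A $ i \<bullet> y) \<le> resid A b y i * - resid A b y i"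
    using resid_nonneg by (rule mult_left_mono)
  then show ?thesis
    by (simp add: inner_diff_left inner_commute power2_eq_square algebra_simps)
next
  case False
  then show ?thesis
    by (simp add: resid_def pospart_def)
qed

lemma sum_resid_sq_le_selected:
  assumes "valid_selection A b \<beta> y sel" "\<tau> \<in> samples \<beta>"
  shows "(\<Sum>i\<in>\<tau>. (resid A b y i)\<^sup>2) \<le> real \<beta> * (resid A b y (sel \<tau>))\<^sup>2"
proof -
  have "(\<Sum>i\<in>\<tau>. (resid A b y i)\<^sup>2) \<le> (\<Sum>i\<in>\<tau>. (resid A b y (sel \<tau>))\<^sup>2)"
    using assms by (intro sum_mono power_mono) (auto simp: valid_selection_def resid_nonneg)
  then show ?thesis
    using assms(2) by (simp add: samples_def)
qed

theorem lemma8: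
  fixes A :: "real^'n^'m" and b :: "real^'m" and \<beta> :: nat and L :: real
    and sel :: "'m set \<Rightarrow> 'm" and y ybar :: "real^'n"
  assumes unit_rows: "\<forall>i. norm (A $ i) = 1"
    and consistent: "polyhedron A b \<noteq> {}"
    and beta: "1 \<le> \<beta>" "\<beta> \<le> CARD('m)"
    and Lpos: "L > 0"
    and hoff: "hoffman_const A b L"
    and sel: "valid_selection A b \<beta> y sel"
    and ybar: "ybar \<in> polyhedron A b"
  shows "inner (ybar - y) (expS \<beta> (\<lambda>\<tau>. resid A b y (sel \<tau>) *\<^sub>R (A $ sel \<tau>)))
            = inner (ybar - y) (grad_f A b \<beta> sel y)
       \<and> inner (ybar - y) (grad_f A b \<beta> sel y) \<le> - 2 * f_obj A b \<beta> sel y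
       \<and> - 2 * f_obj A b \<beta> sel y
            \<le> - (1 / (real CARD('m) * L\<^sup>2)) * (infdist y (polyhedron A b))\<^sup>2"
proof -
  let ?r = "resid A b y"
  have two_f: "expS \<beta> (\<lambda>\<tau>. (?r (sel \<tau>))\<^sup>2) = 2 * f_obj A b \<beta> sel y"
    unfolding f_obj_def expS_cmult by simp
  have "inner (ybar - y) (grad_f A b \<beta> sel y)
      = expS \<beta> (\<lambda>\<tau>. inner (ybar - y) (?r (sel \<tau>) *\<^sub>R A $ sel \<tau>))"
    by (simp add: grad_f_def inner_expS)
  also have "\<dots> \<le> expS \<beta> (\<lambda>\<tau>. - 1 * (?r (sel \<tau>))\<^sup>2)"
    using inner_resid_row_le[OF ybar] by (intro expS_mono) simp
  also have "\<dots> = - 2 * f_obj A b \<beta> sel y"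
    unfolding expS_cmult two_f by simp
  finally have descent: "inner (ybar - y) (grad_f A b \<beta> sel y) \<le> - 2 * f_obj A b \<beta> sel y" .
  have "real \<beta> / real CARD('m) * (\<Sum>i\<in>UNIV. (?r i)\<^sup>2) = expS \<beta> (\<lambda>\<tau>. \<Sum>i\<in>\<tau>. (?r i)\<^sup>2)"
    using expS_sum_members[OF beta] by simp
  also have "\<dots> \<le> real \<beta> * (2 * f_obj A b \<beta> sel y)"
    unfolding two_f[symmetric] expS_cmult[symmetric]
    by (rule expS_mono) (rule sum_resid_sq_le_selected[OF sel])
  finally have "(\<Sum>i\<in>UNIV. (?r i)\<^sup>2) / real CARD('m) \<le> 2 * f_obj A b \<beta> sel y"
    using beta by (simp add: field_simps)
  moreover have "(infdist y (polyhedron A b))\<^sup>2 / (real CARD('m) * L\<^sup>2)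
      \<le> (\<Sum>i\<in>UNIV. (?r i)\<^sup>2) / real CARD('m)"
    using hoff Lpos by (simp add: hoffman_const_def field_simps)
  ultimately have "(infdist y (polyhedron A b))\<^sup>2 / (real CARD('m) * L\<^sup>2) \<le> 2 * f_obj A b \<beta> sel y"
    by linarith
  then show ?thesis
    using descent by (simp add: grad_f_def)
qed

end
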